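(* Let $$L=\widehat{\operatorname{Sym}_L}+a_{20}D_x^2+a_{11}D_xD_y+a_{02}D_y^2+a_{10}D_x+a_{01}D_y+a_{00},$$ with all $a_{ij}\in K$. (1) If $\operatorname{Sym}_L=XY(X+Y)$, so $\widehat{\operatorname{Sym}_L}=D_x^2D_y+D_xD_y^2$, then $$\Big(a_{02}^2-a_{11}a_{02}+a_{01}+\partial_x(a_{02}-a_{11})\Big)D_y+a_{00}-a_{02}a_{10}+a_{02}^2a_{20}+2a_{02}\partial_x(a_{20})-\partial_x(a_{10})+a_{20}\partial_x(a_{02})+\partial_x^2(a_{20})$$ is a common obstacle to factorization of $L$ of type $(X)(YX+YY)$. (2) If $\operatorname{Sym}_L=X^2Y$, so $\widehat{\operatorname{Sym}_L}=D_x^2D_y$, then $$\Big(a_{10}-a_{20}a_{11}-\partial_y(a_{11})\Big)D_x+a_{00}-a_{20}a_{01}+a_{20}^2a_{02}+2a_{20}\partial_y(a_{02})-\partial_y(a_{01})+a_{02}\partial_y(a_{20})+\partial_y^2(a_{02})$$ is a common obstacle to factorization of $L$ of type $(Y)(XX)$.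
   Context: $K$ is a field with two commuting derivations $\partial_x,\partial_y$, and $K[D_x,D_y]$ is the ring of linear differential operators over $K$: $D_xD_y=D_yD_x$, $D_x\circ f=fD_x+\partial_x(f)$ and $D_y\circ f=fD_y+\partial_y(f)$ for $f\in K$. For an operator $M=\sum m_{ij}D_x^iD_y^j$, $\operatorname{ord}(M)$ is the largest $i+j$ with $m_{ij}\ne0$ ($\operatorname{ord}(0)=-\infty$), and the symbol is $\operatorname{Sym}_M=\sum_{i+j=\operatorname{ord}M}m_{ij}X^iY^j$. For a homogeneous polynomial $S=\sum s_{ij}X^iY^j$, $\widehat S=\sum s_{ij}D_x^iD_y^j$. A factorization of type $(S_1)(S_2)$ of $M$ is $M=F_1\circ F_2$ with $\operatorname{Sym}_{F_i}=S_i$. A common obstacle to factorization of $L$ of type $(S_1)(S_2)$ is an operator $R$ such that $L-R$ has a factorization of that type and $R$ has minimal possible order among such operators. *)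

theory Defs
  imports Complex_Main "HOL-Library.Poly_Mapping" "HOL-Library.Extended_Real"
begin

definition diff_field :: "('a::field \<Rightarrow> 'a) \<Rightarrow> ('a \<Rightarrow> 'a) \<Rightarrow> bool" where
  "diff_field dx dy \<longleftrightarrow>
     (\<forall>a b. dx (a + b) = dx a + dx b \<and> dx (a * b) = dx a * b + a * dx b
          \<and> dy (a + b) = dy a + dy b \<and> dy (a * b) = dy a * b + a * dy b
          \<and> dx (dy a) = dy (dx a))"

text \<open>Operators sum m_ij D_x^i D_y^j (and homogeneous polynomials sum s_ij X^i Y^j)
  are represented by their finitely supported coefficient maps (i,j) to m_ij.\<close>
type_synonym 'a dop = "(nat \<times> nat) \<Rightarrow>\<^sub>0 'a"

text \<open>The hat map S to S-hat: replace X^i Y^j by D_x^i D_y^j (identity on coefficient maps).\<close>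
definition hat :: "'a::zero dop \<Rightarrow> 'a dop" where
  "hat S = S"

text \<open>Composition in K[D_x,D_y]:
  (m D_x^a D_y^b) o (n D_x^c D_y^d) =
    sum_{p<=a,q<=b} m (a choose p)(b choose q) dx^p dy^q (n) D_x^(a-p+c) D_y^(b-q+d).\<close>
definition dcomp :: "('a::field \<Rightarrow> 'a) \<Rightarrow> ('a \<Rightarrow> 'a) \<Rightarrow> 'a dop \<Rightarrow> 'a dop \<Rightarrow> 'a dop" where
  "dcomp dx dy M N =
     (\<Sum>(a,b)\<in>Poly_Mapping.keys M. \<Sum>(c,d)\<in>Poly_Mapping.keys N. \<Sum>p\<le>a. \<Sum>q\<le>b.
        Poly_Mapping.single (a - p + c, b - q + d)
          (Poly_Mapping.lookup M (a,b) * of_nat (a choose p) * of_nat (b choose q)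
             * (dx ^^ p) ((dy ^^ q) (Poly_Mapping.lookup N (c,d)))))"

definition dord :: "'a::zero dop \<Rightarrow> ereal" where
  "dord M = (if M = 0 then -\<infinity> else ereal (of_nat (Max ((\<lambda>(i,j). i + j) ` Poly_Mapping.keys M))))"

definition dsym :: "'a::comm_monoid_add dop \<Rightarrow> 'a dop" where
  "dsym M = (\<Sum>(i,j)\<in>Poly_Mapping.keys M.
      if i + j = Max ((\<lambda>(i,j). i + j) ` Poly_Mapping.keys M) then Poly_Mapping.single (i,j) (Poly_Mapping.lookup M (i,j)) else 0)"

definition has_factorization ::
  "('a::field \<Rightarrow> 'a) \<Rightarrow> ('a \<Rightarrow> 'a) \<Rightarrow> 'a dop \<Rightarrow> 'a dop \<Rightarrow> 'a dop \<Rightarrow> bool" where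
  "has_factorization dx dy S1 S2 M \<longleftrightarrow>
     (\<exists>F1 F2. M = dcomp dx dy F1 F2 \<and> dsym F1 = S1 \<and> dsym F2 = S2)"

definition common_obstacle ::
  "('a::field \<Rightarrow> 'a) \<Rightarrow> ('a \<Rightarrow> 'a) \<Rightarrow> 'a dop \<Rightarrow> 'a dop \<Rightarrow> 'a dop \<Rightarrow> 'a dop \<Rightarrow> bool" where
  "common_obstacle dx dy S1 S2 L R \<longleftrightarrow>
     has_factorization dx dy S1 S2 (L - R) \<and>
     (\<forall>R'. has_factorization dx dy S1 S2 (L - R') \<longrightarrow> dord R \<le> dord R')"

abbreviation mon :: "'a::zero \<Rightarrow> nat \<Rightarrow> nat \<Rightarrow> 'a dop" where
  "mon c i j \<equiv> Poly_Mapping.single (i,j) c"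

end

theory Submission
  imports Defs
begin

text \<open>A factorization of the prescribed type is \<open>(D + r) \<circ> (S\<^sub>2 + lower-order terms)\<close>, so the
  operators admitting one form an explicit family parametrised by \<open>r\<close> and the three lower
  coefficients of the second factor. Matching the coefficients of \<open>L\<close> of order two and three
  fixes these parameters and leaves one first-order equation and the constant term unmatched;
  \<open>R\<close> is exactly this defect, so \<open>L - R\<close> factors and \<open>R\<close> has order at most one. A remainder
  of smaller order would be a constant \<open>c\<close>; then all coefficients of positive order match, which
  forces the first-order part of \<open>R\<close> to vanish and \<open>c\<close> to be its constant part.\<close>

locale derivation =
  fixes d :: "'a::ring_1 \<Rightarrow> 'a"
  assumes add: "d (a + b) = d a + d b"
    and mult: "d (a * b) = d a * b + a * d b"
begin

lemma zero [simp]: "d 0 = 0"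
  using add[of 0 0] by simp

lemma one [simp]: "d 1 = 0"
  using mult[of 1 1] by simp

lemma minus: "d (- a) = - d a"
  using add[of "- a" a] by (simp add: eq_neg_iff_add_eq_0)

lemma diff: "d (a - b) = d a - d b"
  using add[of a "- b"] by (simp add: minus)

lemmas rules = add mult minus diff

lemma funpow_zero [simp]: "(d ^^ n) 0 = 0"
  by (induction n) auto

end

lemma diff_field_derivations:
  assumes "diff_field dx dy"
  shows "derivation dx" "derivation dy"
  using assms unfolding diff_field_def by (auto intro: derivation.intro)

definition deg :: "nat \<times> nat \<Rightarrow> nat" where
  "deg = (\<lambda>(i, j). i + j)"

lemma deg_Pair [simp]: "deg (i, j) = i + j"
  by (simp add: deg_def)

lemma dop_eq_constant_if_deg_0:
  assumes "\<forall>k\<in>Poly_Mapping.keys M. deg k = 0"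
  shows "M = mon (Poly_Mapping.lookup M (0,0)) 0 0"
proof (rule poly_mapping_eqI)
  fix k :: "nat \<times> nat"
  show "Poly_Mapping.lookup M k = Poly_Mapping.lookup (mon (Poly_Mapping.lookup M (0,0)) 0 0) k"
    using assms by (cases k) (metis add_is_0 deg_Pair in_keys_iff lookup_single_eq lookup_single_not_eq)
qed

lemma dop_eq_first_order_if_deg_lt_2:
  fixes M :: "'a::monoid_add dop"
  assumes "\<forall>k\<in>Poly_Mapping.keys M. deg k < 2"
  shows "M = mon (Poly_Mapping.lookup M (1,0)) 1 0 + mon (Poly_Mapping.lookup M (0,1)) 0 1
             + mon (Poly_Mapping.lookup M (0,0)) 0 0"
proof (rule poly_mapping_eqI)
  fix k :: "nat \<times> nat"
  obtain i j where k: "k = (i, j)" by force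
  show "Poly_Mapping.lookup M k = Poly_Mapping.lookup (mon (Poly_Mapping.lookup M (1,0)) 1 0
          + mon (Poly_Mapping.lookup M (0,1)) 0 1 + mon (Poly_Mapping.lookup M (0,0)) 0 0) k"
  proof (cases "i + j < 2")
    case True
    then consider "k = (1,0)" | "k = (0,1)" | "k = (0,0)" using k by fastforce
    then show ?thesis by cases (auto simp: lookup_add lookup_single)
  next
    case False
    then have "Poly_Mapping.lookup M k = 0" using assms unfolding k by (metis deg_Pair in_keys_iff)
    with False show ?thesis by (auto simp: k lookup_add lookup_single when_def)
  qed
qed

lemma deg_le_Max_keys: "k \<in> Poly_Mapping.keys M \<Longrightarrow> deg k \<le> Max (deg ` Poly_Mapping.keys M)"
  by (rule Max_ge) auto

lemma lookup_dsym:
  "Poly_Mapping.lookup (dsym M) k =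
     (if deg k = Max (deg ` Poly_Mapping.keys M) then Poly_Mapping.lookup M k else 0)"
proof -
  have "Poly_Mapping.lookup (dsym M) k =
      (\<Sum>l\<in>Poly_Mapping.keys M. if l = k \<and> deg k = Max (deg ` Poly_Mapping.keys M)
                                then Poly_Mapping.lookup M k else 0)"
    unfolding dsym_def lookup_sum deg_def[symmetric]
    by (rule sum.cong) (auto simp: lookup_single when_def deg_def)
  also have "\<dots> = (if deg k = Max (deg ` Poly_Mapping.keys M) then Poly_Mapping.lookup M k else 0)"
    by (auto simp: in_keys_iff if_distrib cong: if_cong)
  finally show ?thesis .
qed

lemma dsym_eq_iff:
  fixes S F :: "'a::ab_group_add dop"
  assumes "S \<noteq> 0" and S_hom: "\<forall>k\<in>Poly_Mapping.keys S. deg k = d"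
  shows "dsym F = S \<longleftrightarrow> (\<forall>k\<in>Poly_Mapping.keys (F - S). deg k < d)"
proof
  assume sym: "dsym F = S"
  define m where "m = Max (deg ` Poly_Mapping.keys F)"
  obtain k0 where k0: "k0 \<in> Poly_Mapping.keys S" using \<open>S \<noteq> 0\<close> keys_eq_empty by blast
  then have "deg k0 = m"
    using sym lookup_dsym[of F k0] by (auto simp: m_def in_keys_iff split: if_splits)
  then have "d = m" using S_hom k0 by auto
  show "\<forall>k\<in>Poly_Mapping.keys (F - S). deg k < d"
  proof
    fix k assume k: "k \<in> Poly_Mapping.keys (F - S)"
    then have "k \<in> Poly_Mapping.keys F"
      using sym lookup_dsym[of F k] by (auto simp: in_keys_iff lookup_minus split: if_splits)
    then have "deg k \<le> m" unfolding m_def by (rule deg_le_Max_keys)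
    moreover have "deg k \<noteq> m"
      using k sym lookup_dsym[of F k] by (auto simp: m_def in_keys_iff lookup_minus)
    ultimately show "deg k < d" using \<open>d = m\<close> by simp
  qed
next
  assume lower: "\<forall>k\<in>Poly_Mapping.keys (F - S). deg k < d"
  have F_S: "Poly_Mapping.lookup F k = Poly_Mapping.lookup S k" if "d \<le> deg k" for k
    using lower that by (force simp: in_keys_iff lookup_minus)
  have keys_F: "deg k \<le> d" if "k \<in> Poly_Mapping.keys F" for k
    using that F_S[of k] S_hom by (cases "d \<le> deg k") (auto simp: in_keys_iff)
  obtain k0 where k0: "k0 \<in> Poly_Mapping.keys S" using \<open>S \<noteq> 0\<close> keys_eq_empty by blast
  have "k0 \<in> Poly_Mapping.keys F" using k0 S_hom F_S[of k0] by (auto simp: in_keys_iff)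
  then have "Max (deg ` Poly_Mapping.keys F) = d"
    using k0 S_hom keys_F by (intro Max_eqI) auto
  then show "dsym F = S"
    using F_S S_hom by (intro poly_mapping_eqI) (auto simp: lookup_dsym in_keys_iff)
qed

lemma dord_eq_Max: "M \<noteq> 0 \<Longrightarrow> dord M = ereal (real (Max (deg ` Poly_Mapping.keys M)))"
  by (simp add: dord_def deg_def)

lemma dord_le_iff: "dord M \<le> ereal (real n) \<longleftrightarrow> (\<forall>k\<in>Poly_Mapping.keys M. deg k \<le> n)"
  by (cases "M = 0") (simp_all add: dord_eq_Max, simp add: dord_def)

lemma deg_le_dord:
  assumes "k \<in> Poly_Mapping.keys M"
  shows "ereal (real (deg k)) \<le> dord M"
proof -
  have "M \<noteq> 0" using assms by auto
  then show ?thesis using deg_le_Max_keys[OF assms] by (simp add: dord_eq_Max)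
qed

text \<open>Any competing remainder is either constant or of order at least one.\<close>
lemma common_obstacle_if_unique_constant_remainder:
  assumes fact: "has_factorization dx dy S1 S2 (L - R)"
    and order: "\<forall>k\<in>Poly_Mapping.keys R. deg k \<le> 1"
    and unique: "\<And>c. has_factorization dx dy S1 S2 (L - mon c 0 0) \<Longrightarrow> R = mon c 0 0"
  shows "common_obstacle dx dy S1 S2 L R"
  unfolding common_obstacle_def
proof (intro conjI allI impI fact)
  fix R' assume fact': "has_factorization dx dy S1 S2 (L - R')"
  show "dord R \<le> dord R'"
  proof (cases "\<forall>k\<in>Poly_Mapping.keys R'. deg k = 0")
    case True
    then have "R' = mon (Poly_Mapping.lookup R' (0, 0)) 0 0"
      by (rule dop_eq_constant_if_deg_0)
    with fact' unique have "R = R'" by metis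
    then show ?thesis by simp
  next
    case False
    then obtain k where k: "k \<in> Poly_Mapping.keys R'" "1 \<le> deg k" by auto
    have "dord R \<le> ereal (real 1)" using order by (simp only: dord_le_iff)
    also have "\<dots> \<le> ereal (real (deg k))" using k(2) by simp
    also have "\<dots> \<le> dord R'" using k(1) by (rule deg_le_dord)
    finally show ?thesis .
  qed
qed

lemma dcomp_eq_sum_over_supersets:
  assumes "derivation dx" "derivation dy" "finite A" "finite B"
    and "Poly_Mapping.keys M \<subseteq> A" "Poly_Mapping.keys N \<subseteq> B"
  shows "dcomp dx dy M N =
     (\<Sum>(a,b)\<in>A. \<Sum>(c,d)\<in>B. \<Sum>p\<le>a. \<Sum>q\<le>b.
        Poly_Mapping.single (a - p + c, b - q + d)
          (Poly_Mapping.lookup M (a,b) * of_nat (a choose p) * of_nat (b choose q)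
             * (dx ^^ p) ((dy ^^ q) (Poly_Mapping.lookup N (c,d)))))"
  unfolding dcomp_def
  by (intro sum.mono_neutral_cong_left)
    (use assms in \<open>auto simp: in_keys_iff derivation.funpow_zero intro!: sum.mono_neutral_left\<close>)

lemma dcomp_Dx_DxDy_Dy2:
  assumes "derivation dx" "derivation dy"
  shows "dcomp dx dy (mon 1 1 0 + mon r 0 0)
            (mon 1 1 1 + mon 1 0 2 + mon b10 1 0 + mon b01 0 1 + mon b00 0 0)
   = mon 1 2 1 + mon 1 1 2 + mon b10 2 0 + mon (b01 + r) 1 1 + mon r 0 2
     + mon (dx b10 + b00 + r * b10) 1 0 + mon (dx b01 + r * b01) 0 1 + mon (dx b00 + r * b00) 0 0"
proof -
  have "Poly_Mapping.keys (mon 1 1 0 + mon r 0 0) \<subseteq> {(1,0), (0,0)}"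
    by (rule order.trans[OF keys_add]) auto
  moreover have "Poly_Mapping.keys (mon 1 1 1 + mon 1 0 2 + mon b10 1 0 + mon b01 0 1 + mon b00 0 0)
      \<subseteq> {(1,1), (0,2), (1,0), (0,1), (0,0)}"
    by (intro order.trans[OF keys_add] Un_least) (auto dest!: set_mp[OF keys_add])
  ultimately show ?thesis
    using derivation.one[OF assms(1)]
    by (subst dcomp_eq_sum_over_supersets[OF assms], simp_all)
      (intro poly_mapping_eqI, simp add: lookup_add lookup_single when_def numeral_2_eq_2)
qed

lemma dcomp_Dy_Dx2:
  assumes "derivation dx" "derivation dy"
  shows "dcomp dx dy (mon 1 0 1 + mon r 0 0) (mon 1 2 0 + mon b10 1 0 + mon b01 0 1 + mon b00 0 0)
   = mon 1 2 1 + mon b10 1 1 + mon b01 0 2 + mon r 2 0 + mon (dy b10 + r * b10) 1 0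
     + mon (dy b01 + b00 + r * b01) 0 1 + mon (dy b00 + r * b00) 0 0"
proof -
  have "Poly_Mapping.keys (mon 1 0 1 + mon r 0 0) \<subseteq> {(0,1), (0,0)}"
    by (rule order.trans[OF keys_add]) auto
  moreover have "Poly_Mapping.keys (mon 1 2 0 + mon b10 1 0 + mon b01 0 1 + mon b00 0 0)
      \<subseteq> {(2,0), (1,0), (0,1), (0,0)}"
    by (intro order.trans[OF keys_add] Un_least) (auto dest!: set_mp[OF keys_add])
  ultimately show ?thesis
    using derivation.one[OF assms(2)]
    by (subst dcomp_eq_sum_over_supersets[OF assms], simp_all)
      (intro poly_mapping_eqI, simp add: lookup_add lookup_single when_def numeral_2_eq_2)
qed

lemma dsym_eq_first_order_monomial_iff:
  fixes F :: "'a::ab_group_add dop"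
  assumes "c \<noteq> 0" "i + j = 1"
  shows "dsym F = mon c i j \<longleftrightarrow> (\<exists>r. F = mon c i j + mon r 0 0)"
proof -
  have "dsym F = mon c i j \<longleftrightarrow> (\<forall>k\<in>Poly_Mapping.keys (F - mon c i j). deg k < 1)"
  proof (rule dsym_eq_iff)
    show "mon c i j \<noteq> 0" using assms(1) by (metis lookup_single_eq lookup_zero)
  qed (use assms(2) in auto)
  also have "\<dots> \<longleftrightarrow> (\<exists>r. F - mon c i j = mon r 0 0)"
  proof
    assume "\<forall>k\<in>Poly_Mapping.keys (F - mon c i j). deg k < 1"
    then show "\<exists>r. F - mon c i j = mon r 0 0"
      using dop_eq_constant_if_deg_0 by blast
  qed (auto split: if_splits)
  finally show ?thesis by (auto simp: algebra_simps)
qed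

lemma dsym_eq_second_order_iff:
  fixes F S :: "'a::ab_group_add dop"
  assumes "S \<noteq> 0" "\<forall>k\<in>Poly_Mapping.keys S. deg k = 2"
  shows "dsym F = S \<longleftrightarrow> (\<exists>b10 b01 b00. F = S + mon b10 1 0 + mon b01 0 1 + mon b00 0 0)"
proof -
  have "dsym F = S \<longleftrightarrow> (\<forall>k\<in>Poly_Mapping.keys (F - S). deg k < 2)"
    using assms by (rule dsym_eq_iff)
  also have "\<dots> \<longleftrightarrow> (\<exists>b10 b01 b00. F - S = mon b10 1 0 + mon b01 0 1 + mon b00 0 0)"
  proof
    assume "\<forall>k\<in>Poly_Mapping.keys (F - S). deg k < 2"
    then show "\<exists>b10 b01 b00. F - S = mon b10 1 0 + mon b01 0 1 + mon b00 0 0"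
      using dop_eq_first_order_if_deg_lt_2 by blast
  qed (auto dest!: set_mp[OF keys_add] split: if_splits)
  finally show ?thesis by (auto simp: algebra_simps)
qed

lemma has_factorization_Dx_DxDy_Dy2_iff:
  fixes dx dy :: "'a::field \<Rightarrow> 'a"
  assumes "derivation dx" "derivation dy"
  shows "has_factorization dx dy (mon 1 1 0) (mon 1 1 1 + mon 1 0 2) M \<longleftrightarrow>
    (\<exists>r b10 b01 b00. M = mon 1 2 1 + mon 1 1 2 + mon b10 2 0 + mon (b01 + r) 1 1 + mon r 0 2
       + mon (dx b10 + b00 + r * b10) 1 0 + mon (dx b01 + r * b01) 0 1 + mon (dx b00 + r * b00) 0 0)"
proof -
  let ?S2 = "mon 1 1 1 + mon 1 0 2 :: 'a dop"
  have "?S2 \<noteq> 0"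
    by (metis lookup_add lookup_single_eq lookup_single_not_eq lookup_zero add_0_right
        one_neq_zero prod.inject)
  moreover have "\<forall>k\<in>Poly_Mapping.keys ?S2. deg k = 2"
    by (auto dest!: set_mp[OF keys_add] split: if_splits)
  ultimately have F2_iff: "dsym F2 = ?S2 \<longleftrightarrow>
      (\<exists>b10 b01 b00. F2 = ?S2 + mon b10 1 0 + mon b01 0 1 + mon b00 0 0)" for F2 :: "'a dop"
    by (rule dsym_eq_second_order_iff)
  have F1_iff: "dsym F1 = mon 1 1 0 \<longleftrightarrow> (\<exists>r. F1 = mon 1 1 0 + mon r 0 0)" for F1 :: "'a dop"
    by (rule dsym_eq_first_order_monomial_iff) simp_all
  have "has_factorization dx dy (mon 1 1 0) ?S2 M \<longleftrightarrow>
      (\<exists>r b10 b01 b00. M = dcomp dx dy (mon 1 1 0 + mon r 0 0)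
                                       (?S2 + mon b10 1 0 + mon b01 0 1 + mon b00 0 0))"
    unfolding has_factorization_def F1_iff F2_iff by blast
  then show ?thesis by (simp only: dcomp_Dx_DxDy_Dy2[OF assms])
qed

lemma has_factorization_Dy_Dx2_iff:
  fixes dx dy :: "'a::field \<Rightarrow> 'a"
  assumes "derivation dx" "derivation dy"
  shows "has_factorization dx dy (mon 1 0 1) (mon 1 2 0) M \<longleftrightarrow>
    (\<exists>r b10 b01 b00. M = mon 1 2 1 + mon b10 1 1 + mon b01 0 2 + mon r 2 0
       + mon (dy b10 + r * b10) 1 0 + mon (dy b01 + b00 + r * b01) 0 1 + mon (dy b00 + r * b00) 0 0)"
proof -
  have "mon 1 2 0 \<noteq> (0 :: 'a dop)"
    by (metis lookup_single_eq lookup_zero one_neq_zero)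
  moreover have "\<forall>k\<in>Poly_Mapping.keys (mon 1 2 0 :: 'a dop). deg k = 2"
    by simp
  ultimately have F2_iff: "dsym F2 = mon 1 2 0 \<longleftrightarrow>
      (\<exists>b10 b01 b00. F2 = mon 1 2 0 + mon b10 1 0 + mon b01 0 1 + mon b00 0 0)" for F2 :: "'a dop"
    by (rule dsym_eq_second_order_iff)
  have F1_iff: "dsym F1 = mon 1 0 1 \<longleftrightarrow> (\<exists>r. F1 = mon 1 0 1 + mon r 0 0)" for F1 :: "'a dop"
    by (rule dsym_eq_first_order_monomial_iff) simp_all
  have "has_factorization dx dy (mon 1 0 1) (mon 1 2 0) M \<longleftrightarrow>
      (\<exists>r b10 b01 b00. M = dcomp dx dy (mon 1 0 1 + mon r 0 0)
                                       (mon 1 2 0 + mon b10 1 0 + mon b01 0 1 + mon b00 0 0))"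
    unfolding has_factorization_def F1_iff F2_iff by blast
  then show ?thesis by (simp only: dcomp_Dy_Dx2[OF assms])
qed

lemma common_obstacle_Dx_DxDy_Dy2:
  fixes dx dy :: "'a::field \<Rightarrow> 'a"
  assumes dx: "derivation dx" and dy: "derivation dy"
  shows
   "common_obstacle dx dy (mon 1 1 0) (mon 1 1 1 + mon 1 0 2)
      (hat (mon 1 2 1 + mon 1 1 2) + mon a20 2 0 + mon a11 1 1 + mon a02 0 2
         + mon a10 1 0 + mon a01 0 1 + mon a00 0 0)
      (mon (a02^2 - a11 * a02 + a01 + dx (a02 - a11)) 0 1
       + mon (a00 - a02 * a10 + a02^2 * a20 + 2 * a02 * dx a20 - dx a10
              + a20 * dx a02 + dx (dx a20)) 0 0)"
    (is "common_obstacle _ _ _ _ ?L (mon ?R1 0 1 + mon ?R0 0 0)")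
proof (rule common_obstacle_if_unique_constant_remainder)
  note factorization = has_factorization_Dx_DxDy_Dy2_iff[OF dx dy]
  note rules = derivation.rules[OF dx]
  have L: "?L = mon 1 2 1 + mon 1 1 2 + mon a20 2 0
      + mon a11 1 1 + mon a02 0 2 + mon a10 1 0 + mon a01 0 1 + mon a00 0 0"
    unfolding hat_def by (simp only: add.assoc)
  define b00 where "b00 = a10 - dx a20 - a02 * a20"
  have "?L - (mon ?R1 0 1 + mon ?R0 0 0) = mon 1 2 1 + mon 1 1 2 + mon a20 2 0 + mon a11 1 1
      + mon a02 0 2 + mon a10 1 0 + mon (a01 - ?R1) 0 1 + mon (a00 - ?R0) 0 0"
    unfolding L by (intro poly_mapping_eqI) (simp add: lookup_minus lookup_add lookup_single when_def)
  also have "\<dots> = mon 1 2 1 + mon 1 1 2 + mon a20 2 0 + mon ((a11 - a02) + a02) 1 1 + mon a02 0 2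
      + mon (dx a20 + b00 + a02 * a20) 1 0 + mon (dx (a11 - a02) + a02 * (a11 - a02)) 0 1
      + mon (dx b00 + a02 * b00) 0 0"
    by (simp add: b00_def rules algebra_simps power2_eq_square)
  finally show "has_factorization dx dy (mon 1 1 0) (mon 1 1 1 + mon 1 0 2)
      (?L - (mon ?R1 0 1 + mon ?R0 0 0))"
    unfolding factorization by blast
  show "\<forall>k\<in>Poly_Mapping.keys (mon ?R1 0 1 + mon ?R0 0 0). deg k \<le> 1"
    by (auto dest!: set_mp[OF keys_add] split: if_splits)
  fix c
  assume "has_factorization dx dy (mon 1 1 0) (mon 1 1 1 + mon 1 0 2) (?L - mon c 0 0)"
  then obtain r b10 b01 b00 where E: "?L - mon c 0 0 = mon 1 2 1 + mon 1 1 2 + mon b10 2 0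
      + mon (b01 + r) 1 1 + mon r 0 2 + mon (dx b10 + b00 + r * b10) 1 0
      + mon (dx b01 + r * b01) 0 1 + mon (dx b00 + r * b00) 0 0"
    unfolding factorization by blast
  have coeff: "Poly_Mapping.lookup ?L k - Poly_Mapping.lookup (mon c 0 0) k = Poly_Mapping.lookup
      (mon 1 2 1 + mon 1 1 2 + mon b10 2 0 + mon (b01 + r) 1 1 + mon r 0 2
       + mon (dx b10 + b00 + r * b10) 1 0 + mon (dx b01 + r * b01) 0 1 + mon (dx b00 + r * b00) 0 0) k"
    for k using arg_cong[OF E, of "\<lambda>M. Poly_Mapping.lookup M k"] by (simp only: lookup_minus)
  have "a20 = b10" "a11 = b01 + r" "a02 = r" "a10 = dx b10 + b00 + r * b10"
    "a01 = dx b01 + r * b01" "a00 - c = dx b00 + r * b00"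
    using coeff[of "(2,0)"] coeff[of "(1,1)"] coeff[of "(0,2)"] coeff[of "(1,0)"]
      coeff[of "(0,1)"] coeff[of "(0,0)"]
    unfolding L by (simp_all add: lookup_add lookup_single)
  then have "?R1 = 0" "?R0 = c"
    by (simp_all add: rules algebra_simps power2_eq_square)
  then show "mon ?R1 0 1 + mon ?R0 0 0 = mon c 0 0" by simp
qed

lemma common_obstacle_Dy_Dx2:
  fixes dx dy :: "'a::field \<Rightarrow> 'a"
  assumes dx: "derivation dx" and dy: "derivation dy"
  shows
   "common_obstacle dx dy (mon 1 0 1) (mon 1 2 0)
      (hat (mon 1 2 1) + mon a20 2 0 + mon a11 1 1 + mon a02 0 2
         + mon a10 1 0 + mon a01 0 1 + mon a00 0 0)
      (mon (a10 - a20 * a11 - dy a11) 1 0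
       + mon (a00 - a20 * a01 + a20^2 * a02 + 2 * a20 * dy a02 - dy a01
              + a02 * dy a20 + dy (dy a02)) 0 0)"
    (is "common_obstacle _ _ _ _ ?L (mon ?R1 1 0 + mon ?R0 0 0)")
proof (rule common_obstacle_if_unique_constant_remainder)
  note factorization = has_factorization_Dy_Dx2_iff[OF dx dy]
  note rules = derivation.rules[OF dy]
  have L: "?L = mon 1 2 1 + mon a20 2 0 + mon a11 1 1 + mon a02 0 2
      + mon a10 1 0 + mon a01 0 1 + mon a00 0 0"
    unfolding hat_def ..
  define b00 where "b00 = a01 - dy a02 - a20 * a02"
  have "?L - (mon ?R1 1 0 + mon ?R0 0 0) = mon 1 2 1 + mon a11 1 1 + mon a02 0 2 + mon a20 2 0
      + mon (a10 - ?R1) 1 0 + mon a01 0 1 + mon (a00 - ?R0) 0 0"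
    unfolding L by (intro poly_mapping_eqI) (simp add: lookup_minus lookup_add lookup_single when_def)
  also have "\<dots> = mon 1 2 1 + mon a11 1 1 + mon a02 0 2 + mon a20 2 0
      + mon (dy a11 + a20 * a11) 1 0 + mon (dy a02 + b00 + a20 * a02) 0 1
      + mon (dy b00 + a20 * b00) 0 0"
    by (simp add: b00_def rules algebra_simps power2_eq_square)
  finally show "has_factorization dx dy (mon 1 0 1) (mon 1 2 0) (?L - (mon ?R1 1 0 + mon ?R0 0 0))"
    unfolding factorization by blast
  show "\<forall>k\<in>Poly_Mapping.keys (mon ?R1 1 0 + mon ?R0 0 0). deg k \<le> 1"
    by (auto dest!: set_mp[OF keys_add] split: if_splits)
  fix c
  assume "has_factorization dx dy (mon 1 0 1) (mon 1 2 0) (?L - mon c 0 0)"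
  then obtain r b10 b01 b00 where E: "?L - mon c 0 0 = mon 1 2 1 + mon b10 1 1 + mon b01 0 2
      + mon r 2 0 + mon (dy b10 + r * b10) 1 0 + mon (dy b01 + b00 + r * b01) 0 1
      + mon (dy b00 + r * b00) 0 0"
    unfolding factorization by blast
  have coeff: "Poly_Mapping.lookup ?L k - Poly_Mapping.lookup (mon c 0 0) k = Poly_Mapping.lookup
      (mon 1 2 1 + mon b10 1 1 + mon b01 0 2 + mon r 2 0 + mon (dy b10 + r * b10) 1 0
       + mon (dy b01 + b00 + r * b01) 0 1 + mon (dy b00 + r * b00) 0 0) k"
    for k using arg_cong[OF E, of "\<lambda>M. Poly_Mapping.lookup M k"] by (simp only: lookup_minus)
  have "a20 = r" "a11 = b10" "a02 = b01" "a10 = dy b10 + r * b10"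
    "a01 = dy b01 + b00 + r * b01" "a00 - c = dy b00 + r * b00"
    using coeff[of "(2,0)"] coeff[of "(1,1)"] coeff[of "(0,2)"] coeff[of "(1,0)"]
      coeff[of "(0,1)"] coeff[of "(0,0)"]
    unfolding L by (simp_all add: lookup_add lookup_single)
  then have "?R1 = 0" "?R0 = c"
    by (simp_all add: rules algebra_simps power2_eq_square)
  then show "mon ?R1 1 0 + mon ?R0 0 0 = mon c 0 0" by simp
qed

theorem mainTheorem13:
  fixes dx dy :: "'a::field \<Rightarrow> 'a"
    and a20 a11 a02 a10 a01 a00 :: 'a
  assumes "diff_field dx dy"
  shows
   "common_obstacle dx dy (mon 1 1 0) (mon 1 1 1 + mon 1 0 2)
      (hat (mon 1 2 1 + mon 1 1 2) + mon a20 2 0 + mon a11 1 1 + mon a02 0 2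
         + mon a10 1 0 + mon a01 0 1 + mon a00 0 0)
      (mon (a02^2 - a11 * a02 + a01 + dx (a02 - a11)) 0 1
       + mon (a00 - a02 * a10 + a02^2 * a20 + 2 * a02 * dx a20 - dx a10
              + a20 * dx a02 + dx (dx a20)) 0 0)
    \<and>
    common_obstacle dx dy (mon 1 0 1) (mon 1 2 0)
      (hat (mon 1 2 1) + mon a20 2 0 + mon a11 1 1 + mon a02 0 2
         + mon a10 1 0 + mon a01 0 1 + mon a00 0 0)
      (mon (a10 - a20 * a11 - dy a11) 1 0
       + mon (a00 - a20 * a01 + a20^2 * a02 + 2 * a20 * dy a02 - dy a01
              + a02 * dy a20 + dy (dy a02)) 0 0)"
  using common_obstacle_Dx_DxDy_Dy2 common_obstacle_Dy_Dx2 diff_field_derivations[OF assms]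
  by blast

end
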